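(* (1) For every $\theta\in\mathbb{C}^4$, the projective surface $\overline{\mathcal{S}}(\theta)$ is smooth in a neighborhood of $L=L_1\cup L_2\cup L_3$. (2) If $\theta=\mathrm{rh}(\kappa)$ with $\kappa\in\mathcal{K}$, then $\overline{\mathcal{S}}(\theta)$ is smooth everywhere if and only if $\kappa\in\mathcal{K}\setminus\mathrm{Wall}$.
   Context: For $\theta=(\theta_1,\theta_2,\theta_3,\theta_4)\in\mathbb{C}^4$, $\overline{\mathcal{S}}(\theta)\subset\mathbb{P}^3$ is the cubic surface $X_1X_2X_3+X_0(X_1^2+X_2^2+X_3^2)-X_0^2(\theta_1X_1+\theta_2X_2+\theta_3X_3)+\theta_4X_0^3=0$, the closure of the affine surface $x_1x_2x_3+x_1^2+x_2^2+x_3^2-\theta_1x_1-\theta_2x_2-\theta_3x_3+\theta_4=0$ via $x\mapsto[1:x_1:x_2:x_3]$; $L_i=\{X_0=X_i=0\}$ for $i=1,2,3$. $\mathcal{K}=\{\kappa\in\mathbb{C}^5:2\kappa_0+\kappa_1+\kappa_2+\kappa_3+\kappa_4=1\}$; $\mathrm{Wall}$ is the union of the hyperplanes $\kappa_i=m$ ($i=1,\dots,4$, $m\in\mathbb{Z}$) and $\kappa_1\pm\kappa_2\pm\kappa_3\pm\kappa_4=2m+1$ ($m\in\mathbb{Z}$). The map $\mathrm{rh}:\mathcal{K}\to\mathbb{C}^4$ is defined by $a_i=2\cos\pi\kappa_i$ ($i=1,2,3$), $a_4=-2\cos\pi\kappa_4$, $\theta_i=a_ia_4+a_ja_k$ for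 $\{i,j,k\}=\{1,2,3\}$, and $\theta_4=a_1a_2a_3a_4+a_1^2+a_2^2+a_3^2+a_4^2-4$. *)

theory Defs
  imports "HOL-Analysis.Analysis"
begin

text \<open>Points of C^4 (homogeneous coordinates [X0:X1:X2:X3] of P^3) are 4-tuples.
  Parameters theta = (theta 1, ..., theta 4) and kappa = (kappa 0, ..., kappa 4)
  are given as functions on indices; only the listed indices matter.\<close>

type_synonym pt4 = "complex \<times> complex \<times> complex \<times> complex"

definition cubicF :: "(nat \<Rightarrow> complex) \<Rightarrow> complex \<Rightarrow> complex \<Rightarrow> complex \<Rightarrow> complex \<Rightarrow> complex" where
  "cubicF \<theta> X0 X1 X2 X3 =
     X1 * X2 * X3 + X0 * (X1^2 + X2^2 + X3^2)
     - X0^2 * (\<theta> 1 * X1 + \<theta> 2 * X2 + \<theta> 3 * X3) + \<theta> 4 * X0^3"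

definition sing_point :: "(nat \<Rightarrow> complex) \<Rightarrow> pt4 \<Rightarrow> bool" where
  "sing_point \<theta> X = (case X of (X0, X1, X2, X3) \<Rightarrow>
      X \<noteq> 0 \<and> cubicF \<theta> X0 X1 X2 X3 = 0
      \<and> deriv (\<lambda>t. cubicF \<theta> t X1 X2 X3) X0 = 0
      \<and> deriv (\<lambda>t. cubicF \<theta> X0 t X2 X3) X1 = 0
      \<and> deriv (\<lambda>t. cubicF \<theta> X0 X1 t X3) X2 = 0
      \<and> deriv (\<lambda>t. cubicF \<theta> X0 X1 X2 t) X3 = 0)"

text \<open>Cone over L = L1 \<union> L2 \<union> L3, L_i = {X0 = Xi = 0}.\<close>
definition coneL :: "pt4 set" where
  "coneL = {(X0, X1, X2, X3). (X0, X1, X2, X3) \<noteq> 0 \<and> X0 = 0 \<and> (X1 = 0 \<or> X2 = 0 \<or> X3 = 0)}"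

text \<open>Smooth in a neighbourhood of L: there is an open set of C^4 containing the
  cone over L (equivalently, its image, an open subset of P^3 containing L) with
  no singular points of the surface.\<close>
definition smooth_near_L :: "(nat \<Rightarrow> complex) \<Rightarrow> bool" where
  "smooth_near_L \<theta> = (\<exists>U::pt4 set. open U \<and> coneL \<subseteq> U \<and> (\<forall>X\<in>U. \<not> sing_point \<theta> X))"

definition smooth_everywhere :: "(nat \<Rightarrow> complex) \<Rightarrow> bool" where
  "smooth_everywhere \<theta> = (\<forall>X. \<not> sing_point \<theta> X)"

definition Kset :: "(nat \<Rightarrow> complex) set" where
  "Kset = {\<kappa>. 2 * \<kappa> 0 + \<kappa> 1 + \<kappa> 2 + \<kappa> 3 + \<kappa> 4 = 1}"

definition Wall :: "(nat \<Rightarrow> complex) set" where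
  "Wall = {\<kappa>. (\<exists>i\<in>{1,2,3,4::nat}. \<kappa> i \<in> \<int>)
     \<or> (\<exists>s2\<in>{1,-1::complex}. \<exists>s3\<in>{1,-1::complex}. \<exists>s4\<in>{1,-1::complex}. \<exists>m::int.
          \<kappa> 1 + s2 * \<kappa> 2 + s3 * \<kappa> 3 + s4 * \<kappa> 4 = of_int (2 * m + 1))}"

definition rh :: "(nat \<Rightarrow> complex) \<Rightarrow> (nat \<Rightarrow> complex)" where
  "rh \<kappa> = (let a1 = 2 * cos (of_real pi * \<kappa> 1); a2 = 2 * cos (of_real pi * \<kappa> 2);
               a3 = 2 * cos (of_real pi * \<kappa> 3); a4 = - 2 * cos (of_real pi * \<kappa> 4)
           in (\<lambda>i. if i = 1 then a1 * a4 + a2 * a3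
                   else if i = 2 then a2 * a4 + a1 * a3
                   else if i = 3 then a3 * a4 + a1 * a2
                   else if i = 4 then a1 * a2 * a3 * a4 + a1^2 + a2^2 + a3^2 + a4^2 - 4
                   else 0))"

end

theory Submission
  imports Defs
begin

text \<open>On the plane at infinity X0 = 0 the gradient of the cubic is
  (X1^2 + X2^2 + X3^2, X2 X3, X1 X3, X1 X2), which vanishes only at 0. Hence the set where the
  gradient does not vanish is an open neighbourhood of L free of singular points, and all singular
  points lie in the chart X0 = 1. There x is singular iff theta = theta_param x1 x2 x3 2, where
  theta_param is the polynomial map in the definition of rh: the surface for theta_param a is
  singular iff the fibre of theta_param through a meets the hyperplane a4 = 2.

  For rh kappa we have a_i = t_i + 1/t_i with t_i = exp(i pi kappa_i) (and t4 = - exp(i pi kappa_4)).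
  Eliminating x from theta_param a = theta_param x1 x2 x3 2 gives
  prod (2 - a_i) * prod (2 + a_i) * wall_poly a = 0, and t1^4 * wall_poly a is the product of the
  eight factors t1 t2^(+-1) t3^(+-1) t4^(+-1) - 1. So a singular point forces t_i = +-1, i.e. an
  integer kappa_i, or kappa1 +- kappa2 +- kappa3 +- kappa4 odd. Conversely, in each of these cases
  a point of the fibre with a4 = 2 is explicit: by the symmetries of theta_param when some
  a_i = +-2, and because u1 u2 u3 u4 = 1 implies
  theta_param a = theta_param (J(u1 u4)) (J(u2 u4)) (J(u3 u4)) 2 for a_i = J u_i = u_i + 1/u_i.\<close>

lemma deriv_cubicF:
  shows "deriv (\<lambda>t. cubicF \<theta> t X1 X2 X3) X0 =
           X1^2 + X2^2 + X3^2 - 2*X0*(\<theta> 1*X1 + \<theta> 2*X2 + \<theta> 3*X3) + 3*\<theta> 4*X0^2"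
    and "deriv (\<lambda>t. cubicF \<theta> X0 t X2 X3) X1 = X2*X3 + 2*X0*X1 - X0^2*\<theta> 1"
    and "deriv (\<lambda>t. cubicF \<theta> X0 X1 t X3) X2 = X1*X3 + 2*X0*X2 - X0^2*\<theta> 2"
    and "deriv (\<lambda>t. cubicF \<theta> X0 X1 X2 t) X3 = X1*X2 + 2*X0*X3 - X0^2*\<theta> 3"
  unfolding cubicF_def
  by (rule DERIV_imp_deriv, (rule derivative_eq_intros refl)+, simp add: algebra_simps power2_eq_square)+

definition cubicF_grad :: "(nat \<Rightarrow> complex) \<Rightarrow> pt4 \<Rightarrow> pt4" where
  "cubicF_grad \<theta> X = (case X of (X0, X1, X2, X3) \<Rightarrow>
     (X1^2 + X2^2 + X3^2 - 2*X0*(\<theta> 1*X1 + \<theta> 2*X2 + \<theta> 3*X3) + 3*\<theta> 4*X0^2,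
      X2*X3 + 2*X0*X1 - X0^2*\<theta> 1, X1*X3 + 2*X0*X2 - X0^2*\<theta> 2, X1*X2 + 2*X0*X3 - X0^2*\<theta> 3))"

lemma sing_point_iff:
  "sing_point \<theta> (X0, X1, X2, X3) \<longleftrightarrow>
     (X0, X1, X2, X3) \<noteq> 0 \<and> cubicF \<theta> X0 X1 X2 X3 = 0 \<and> cubicF_grad \<theta> (X0, X1, X2, X3) = 0"
  by (simp add: sing_point_def cubicF_grad_def deriv_cubicF zero_prod_def)

lemma cubicF_grad_nonzero_at_infinity:
  assumes "(0, X1, X2, X3) \<noteq> (0 :: pt4)"
  shows "cubicF_grad \<theta> (0, X1, X2, X3) \<noteq> 0"
  using assms by (auto simp: cubicF_grad_def zero_prod_def)

lemma continuous_on_cubicF_grad: "continuous_on UNIV (cubicF_grad \<theta>)"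
  unfolding cubicF_grad_def case_prod_unfold by (intro continuous_intros)

lemma smooth_near_L: "smooth_near_L \<theta>"
  unfolding smooth_near_L_def
proof (intro exI conjI)
  show "open {X. cubicF_grad \<theta> X \<noteq> 0}"
    by (intro open_Collect_neq continuous_on_cubicF_grad continuous_on_const)
  show "coneL \<subseteq> {X. cubicF_grad \<theta> X \<noteq> 0}"
    using cubicF_grad_nonzero_at_infinity by (auto simp: coneL_def)
  show "\<forall>X\<in>{X. cubicF_grad \<theta> X \<noteq> 0}. \<not> sing_point \<theta> X"
    by (auto simp: sing_point_iff)
qed

definition theta_param :: "complex \<Rightarrow> complex \<Rightarrow> complex \<Rightarrow> complex \<Rightarrow> nat \<Rightarrow> complex" where
  "theta_param a1 a2 a3 a4 = (\<lambda>i. if i = 1 then a1 * a4 + a2 * a3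
     else if i = 2 then a2 * a4 + a1 * a3
     else if i = 3 then a3 * a4 + a1 * a2
     else if i = 4 then a1 * a2 * a3 * a4 + a1^2 + a2^2 + a3^2 + a4^2 - 4
     else 0)"

lemma sing_point_affine_iff:
  "sing_point \<theta> (1, x1, x2, x3) \<longleftrightarrow> (\<forall>i\<in>{1,2,3,4}. \<theta> i = theta_param x1 x2 x3 2 i)"
proof -
  have "sing_point \<theta> (1, x1, x2, x3) \<longleftrightarrow>
      x1*x2*x3 + (x1^2 + x2^2 + x3^2) - (\<theta> 1*x1 + \<theta> 2*x2 + \<theta> 3*x3) + \<theta> 4 = 0 \<and>
      x1^2 + x2^2 + x3^2 - 2*(\<theta> 1*x1 + \<theta> 2*x2 + \<theta> 3*x3) + 3*\<theta> 4 = 0 \<and>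
      x2*x3 + 2*x1 - \<theta> 1 = 0 \<and> x1*x3 + 2*x2 - \<theta> 2 = 0 \<and> x1*x2 + 2*x3 - \<theta> 3 = 0"
    by (auto simp: sing_point_iff cubicF_def cubicF_grad_def zero_prod_def)
  also have "\<dots> \<longleftrightarrow> \<theta> 1 = 2*x1 + x2*x3 \<and> \<theta> 2 = 2*x2 + x1*x3 \<and> \<theta> 3 = 2*x3 + x1*x2 \<and>
      \<theta> 4 = x1^2 + x2^2 + x3^2 + 2*x1*x2*x3"
    by (rule iffI; (elim conjE)?, (intro conjI)?) algebra+
  finally show ?thesis by (simp add: theta_param_def algebra_simps)
qed

lemma sing_point_scale:
  assumes "c \<noteq> 0"
  shows "sing_point \<theta> (c*X0, c*X1, c*X2, c*X3) \<longleftrightarrow> sing_point \<theta> (X0, X1, X2, X3)"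
proof -
  have "cubicF \<theta> (c*X0) (c*X1) (c*X2) (c*X3) = c^3 * cubicF \<theta> X0 X1 X2 X3"
    unfolding cubicF_def by algebra
  moreover have "cubicF_grad \<theta> (c*X0, c*X1, c*X2, c*X3) =
      (case cubicF_grad \<theta> (X0, X1, X2, X3) of
         (G0, G1, G2, G3) \<Rightarrow> (c^2 * G0, c^2 * G1, c^2 * G2, c^2 * G3))"
    unfolding cubicF_grad_def prod.case prod.inject by (intro conjI; algebra)
  ultimately show ?thesis
    using assms by (cases "cubicF_grad \<theta> (X0, X1, X2, X3)") (simp add: sing_point_iff zero_prod_def)
qed

lemma smooth_everywhere_iff:
  "smooth_everywhere \<theta> \<longleftrightarrow> \<not> (\<exists>x1 x2 x3. \<forall>i\<in>{1,2,3,4}. \<theta> i = theta_param x1 x2 x3 2 i)"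
proof
  assume "smooth_everywhere \<theta>"
  then show "\<not> (\<exists>x1 x2 x3. \<forall>i\<in>{1,2,3,4}. \<theta> i = theta_param x1 x2 x3 2 i)"
    unfolding smooth_everywhere_def by (metis sing_point_affine_iff)
next
  assume no_affine: "\<not> (\<exists>x1 x2 x3. \<forall>i\<in>{1,2,3,4}. \<theta> i = theta_param x1 x2 x3 2 i)"
  show "smooth_everywhere \<theta>"
    unfolding smooth_everywhere_def
  proof (intro allI notI)
    fix X :: pt4
    assume sing: "sing_point \<theta> X"
    obtain X0 X1 X2 X3 where X: "X = (X0, X1, X2, X3)" by (cases X) auto
    have "X0 \<noteq> 0"
      using sing cubicF_grad_nonzero_at_infinity by (auto simp: X sing_point_iff)
    then have "sing_point \<theta> (1, X1/X0, X2/X0, X3/X0)"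
      using sing sing_point_scale[of "1/X0" \<theta> X0 X1 X2 X3] by (simp add: X)
    with no_affine show False by (auto simp: sing_point_affine_iff)
  qed
qed

lemma theta_param_eq_iff:
  "theta_param a1 a2 a3 a4 = theta_param b1 b2 b3 b4 \<longleftrightarrow>
     (\<forall>i\<in>{1,2,3,4}. theta_param a1 a2 a3 a4 i = theta_param b1 b2 b3 b4 i)"
proof (intro iffI ballI ext)
  fix i :: nat
  assume "\<forall>i\<in>{1,2,3,4}. theta_param a1 a2 a3 a4 i = theta_param b1 b2 b3 b4 i"
  then show "theta_param a1 a2 a3 a4 i = theta_param b1 b2 b3 b4 i"
    by (cases "i \<in> {1,2,3,4}") (auto simp: theta_param_def)
qed simp

lemma smooth_everywhere_theta_param_iff:
  "smooth_everywhere (theta_param a1 a2 a3 a4) \<longleftrightarrow>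
     \<not> (\<exists>x1 x2 x3. theta_param a1 a2 a3 a4 = theta_param x1 x2 x3 2)"
  by (simp only: smooth_everywhere_iff theta_param_eq_iff)

lemma theta_param_klein:
  shows "theta_param a2 a1 a4 a3 = theta_param a1 a2 a3 a4"
    and "theta_param a3 a4 a1 a2 = theta_param a1 a2 a3 a4"
    and "theta_param a4 a3 a2 a1 = theta_param a1 a2 a3 a4"
  by (auto simp: theta_param_def fun_eq_iff algebra_simps)

lemma theta_param_uminus: "theta_param (-a1) (-a2) (-a3) (-a4) = theta_param a1 a2 a3 a4"
  by (simp add: theta_param_def fun_eq_iff)

lemma theta_param_fibre_meets_two_if_entry_two:
  assumes "a \<in> {a1, a2, a3, a4}" "a = 2 \<or> a = -2"
  shows "\<exists>x1 x2 x3. theta_param a1 a2 a3 a4 = theta_param x1 x2 x3 2"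
proof -
  have two_last: "\<exists>x1 x2 x3. theta_param b c d e = theta_param x1 x2 x3 2"
    if "e = 2 \<or> e = -2" for b c d e
  proof -
    have "theta_param b c d e = theta_param b c d 2 \<or>
        theta_param b c d e = theta_param (-b) (-c) (-d) 2"
      using that theta_param_uminus[of "-b" "-c" "-d" 2] by auto
    then show ?thesis by blast
  qed
  from assms(1) consider "a = a1" | "a = a2" | "a = a3" | "a = a4" by blast
  then show ?thesis
  proof cases
    case 1
    then show ?thesis
      using two_last[where b = a4 and c = a3 and d = a2 and e = a1] assms(2) by (simp only: theta_param_klein)
  next
    case 2
    then show ?thesis
      using two_last[where b = a3 and c = a4 and d = a1 and e = a2] assms(2) by (simp only: theta_param_klein)
  next
    case 3
    then show ?thesis
      using two_last[where b = a2 and c = a1 and d = a4 and e = a3] assms(2) by (simp only: theta_param_klein)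
  next
    case 4
    then show ?thesis
      using two_last[where b = a1 and c = a2 and d = a3 and e = a4] assms(2) by (simp only:)
  qed
qed

definition joukowsky :: "complex \<Rightarrow> complex" where
  "joukowsky t = t + 1 / t"

lemma joukowsky_inverse: "joukowsky (1 / t) = joukowsky t"
  by (simp add: joukowsky_def)

lemma joukowsky_uminus: "joukowsky (- t) = - joukowsky t"
  by (simp add: joukowsky_def)

lemma joukowsky_eq_iff:
  assumes "t \<noteq> 0" "u \<noteq> 0"
  shows "joukowsky t = joukowsky u \<longleftrightarrow> t = u \<or> t * u = 1"
proof -
  have "t * u * (joukowsky t - joukowsky u) = (t - u) * (t * u - 1)"
    using assms by (simp add: joukowsky_def field_simps)
  then show ?thesis using assms by auto
qed

lemma joukowsky_mult_divide:
  assumes "t \<noteq> 0" "w \<noteq> 0"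
  shows "joukowsky (t * w) + joukowsky (t / w) = joukowsky t * joukowsky w"
    and "joukowsky (t * w) * joukowsky (t / w) = (joukowsky t)^2 + (joukowsky w)^2 - 4"
  using assms by (simp_all add: joukowsky_def field_simps power2_eq_square)

lemma theta_param_joukowsky_product_one:
  assumes "u1 \<noteq> 0" "u2 \<noteq> 0" "u3 \<noteq> 0" "u4 \<noteq> 0" "u1 * u2 * u3 * u4 = 1"
  shows "theta_param (joukowsky u1) (joukowsky u2) (joukowsky u3) (joukowsky u4) =
         theta_param (joukowsky (u1 * u4)) (joukowsky (u2 * u4)) (joukowsky (u3 * u4)) 2"
proof -
  have u1: "u1 = 1 / (u2 * u3 * u4)" using assms by (simp add: field_simps)
  show ?thesis unfolding u1 using assms(2-4)
    by (auto simp: theta_param_def joukowsky_def field_simps power2_eq_square)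
qed

definition fricke :: "complex \<Rightarrow> complex \<Rightarrow> complex \<Rightarrow> complex" where
  "fricke x y z = x^2 + y^2 + z^2 - x * y * z - 4"

lemma fricke_joukowsky:
  assumes "t \<noteq> 0" "w \<noteq> 0"
  shows "fricke x (joukowsky t) (joukowsky w) = (x - joukowsky (t * w)) * (x - joukowsky (t / w))"
  using joukowsky_mult_divide[OF assms] unfolding fricke_def by algebra

text \<open>The factor of the elimination below that vanishes on the walls
  kappa1 +- kappa2 +- kappa3 +- kappa4 = 2m + 1.\<close>
definition wall_poly :: "complex \<Rightarrow> complex \<Rightarrow> complex \<Rightarrow> complex \<Rightarrow> complex" where
  "wall_poly a1 a2 a3 a4 =
    (let s = a1 + a2 + a3 + a4;
         v = 4 * s + a1*a2*a3 + a1*a2*a4 + a1*a3*a4 + a2*a3*a4;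
         w = 16 + 4 * (a1*a2 + a1*a3 + a1*a4 + a2*a3 + a2*a4 + a3*a4) + a1*a2*a3*a4 - s^2
     in v^2 - w * s^2)"

lemma wall_poly_fricke:
  assumes "p + q = a3 * a4" "p * q = a3^2 + a4^2 - 4"
  shows "wall_poly a1 a2 a3 a4 = fricke a1 a2 p * fricke a1 a2 q"
  using assms unfolding wall_poly_def fricke_def Let_def by algebra

lemma wall_poly_joukowsky:
  assumes "t1 \<noteq> 0" "t2 \<noteq> 0" "t3 \<noteq> 0" "t4 \<noteq> 0"
  defines "a1 \<equiv> joukowsky t1"
  shows "wall_poly a1 (joukowsky t2) (joukowsky t3) (joukowsky t4) =
    (a1 - joukowsky (t2 * t3 * t4)) * (a1 - joukowsky (t2 * (1 / t3) * (1 / t4))) *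
    (a1 - joukowsky (t2 * t3 * (1 / t4))) * (a1 - joukowsky (t2 * (1 / t3) * t4))"
proof -
  have "wall_poly a1 (joukowsky t2) (joukowsky t3) (joukowsky t4) =
      fricke a1 (joukowsky t2) (joukowsky (t3 * t4)) * fricke a1 (joukowsky t2) (joukowsky (t3 / t4))"
    using joukowsky_mult_divide[OF assms(3,4)] by (intro wall_poly_fricke) (auto simp: fricke_def)
  also have "\<dots> = (a1 - joukowsky (t2 * (t3 * t4))) * (a1 - joukowsky (t2 / (t3 * t4))) *
      ((a1 - joukowsky (t2 * (t3 / t4))) * (a1 - joukowsky (t2 / (t3 / t4))))"
    using assms(2-4) by (simp add: fricke_joukowsky)
  finally show ?thesis using assms(3,4) by (simp add: ac_simps)
qed

text \<open>The resultant in f of the two polynomials is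
  -16 (w + s^2 - 2v) (w + s^2 + 2v) (v^2 - w s^2)^2.\<close>
lemma cubic_quadratic_common_root:
  fixes s v w f :: complex
  assumes "f^3 - (w + 2 * s^2) * f + 2 * s * v = 0"
    and "(w + 2 * s^2) * f^2 - 6 * s * v * f = w^2 - 4 * v^2"
  shows "(w + s^2 - 2 * v) * (w + s^2 + 2 * v) * (v^2 - w * s^2) = 0"
  using assms by algebra

lemma theta_param_fibre_meets_two_imp:
  assumes "theta_param a1 a2 a3 a4 = theta_param x1 x2 x3 2"
  shows "(2 - a1) * (2 - a2) * (2 - a3) * (2 - a4) * ((2 + a1) * (2 + a2) * (2 + a3) * (2 + a4)) *
           wall_poly a1 a2 a3 a4 = 0"
proof -
  have eqs: "a1 * a4 + a2 * a3 = 2 * x1 + x2 * x3" "a2 * a4 + a1 * a3 = 2 * x2 + x1 * x3"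
    "a3 * a4 + a1 * a2 = 2 * x3 + x1 * x2"
    "a1 * a2 * a3 * a4 + a1^2 + a2^2 + a3^2 + a4^2 = 2 * x1 * x2 * x3 + x1^2 + x2^2 + x3^2 + 4"
    using fun_cong[OF assms, of 1] fun_cong[OF assms, of 2] fun_cong[OF assms, of 3]
      fun_cong[OF assms, of 4]
    by (simp_all add: theta_param_def algebra_simps)
  define s where "s = a1 + a2 + a3 + a4"
  define v where "v = 4 * s + a1 * a2 * a3 + a1 * a2 * a4 + a1 * a3 * a4 + a2 * a3 * a4"
  define w where
    "w = 16 + 4 * (a1 * a2 + a1 * a3 + a1 * a4 + a2 * a3 + a2 * a4 + a3 * a4) + a1 * a2 * a3 * a4 - s^2"
  \<comment> \<open>eliminating x leaves a cubic and a quadratic in the sum f of the entries of (x1, x2, x3, 2)\<close>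
  define f where "f = x1 + x2 + x3 + 2"
  have "f^3 - (w + 2 * s^2) * f + 2 * s * v = 0"
    using eqs unfolding f_def w_def v_def s_def by algebra
  moreover have "(w + 2 * s^2) * f^2 - 6 * s * v * f = w^2 - 4 * v^2"
    using eqs unfolding f_def w_def v_def s_def by algebra
  ultimately have "(w + s^2 - 2 * v) * (w + s^2 + 2 * v) * (v^2 - w * s^2) = 0"
    by (rule cubic_quadratic_common_root)
  moreover have "w + s^2 - 2 * v = (2 - a1) * (2 - a2) * (2 - a3) * (2 - a4)"
    unfolding w_def v_def s_def by algebra
  moreover have "w + s^2 + 2 * v = (2 + a1) * (2 + a2) * (2 + a3) * (2 + a4)"
    unfolding w_def v_def s_def by algebra
  moreover have "v^2 - w * s^2 = wall_poly a1 a2 a3 a4"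
    unfolding wall_poly_def w_def v_def s_def Let_def ..
  ultimately show ?thesis by simp
qed

lemma joukowsky_fibre_meets_two_imp:
  assumes "t1 \<noteq> 0" "t2 \<noteq> 0" "t3 \<noteq> 0" "t4 \<noteq> 0"
    and "theta_param (joukowsky t1) (joukowsky t2) (joukowsky t3) (joukowsky t4) =
         theta_param x1 x2 x3 2"
  shows "(\<exists>t\<in>{t1, t2, t3, t4}. t^2 = 1) \<or>
         (\<exists>u2\<in>{t2, 1 / t2}. \<exists>u3\<in>{t3, 1 / t3}. \<exists>u4\<in>{t4, 1 / t4}. t1 * u2 * u3 * u4 = 1)"
proof -
  from theta_param_fibre_meets_two_imp[OF assms(5)] wall_poly_joukowsky[OF assms(1-4)]
  consider (plus_two) t where "t \<in> {t1, t2, t3, t4}" "2 - joukowsky t = 0"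
    | (minus_two) t where "t \<in> {t1, t2, t3, t4}" "2 + joukowsky t = 0"
    | (sum) u
      where "u \<in> {t2 * t3 * t4, t2 * (1 / t3) * (1 / t4), t2 * t3 * (1 / t4), t2 * (1 / t3) * t4}"
        "joukowsky t1 - joukowsky u = 0"
    by (simp only: mult_eq_0_iff) blast
  then show ?thesis
  proof cases
    case plus_two
    then have "joukowsky t = joukowsky 1" by (simp add: joukowsky_def)
    then have "t = 1" using plus_two(1) assms(1-4) joukowsky_eq_iff[of t 1] by auto
    then have "t^2 = 1" by simp
    with plus_two(1) show ?thesis by blast
  next
    case minus_two
    then have "joukowsky t = joukowsky (-1)" by (simp add: joukowsky_def add_eq_0_iff)
    then have "t = -1" using minus_two(1) assms(1-4) joukowsky_eq_iff[of t "-1"]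
      by (auto simp: minus_equation_iff)
    then have "t^2 = 1" by simp
    with minus_two(1) show ?thesis by blast
  next
    case sum
    obtain u3 u4 where u3: "u3 \<in> {t3, 1 / t3}" and u4: "u4 \<in> {t4, 1 / t4}"
      and u: "u = t2 * u3 * u4"
      using sum(1) by blast
    have "u3 \<noteq> 0" "u4 \<noteq> 0" using u3 u4 assms(3,4) by auto
    then have "t1 = u \<or> t1 * u = 1"
      using sum(2) assms(1,2) joukowsky_eq_iff[of t1 u] by (simp add: u)
    then show ?thesis
    proof
      assume "t1 = u"
      then have "t1 * (1 / t2) * (1 / u3) * (1 / u4) = 1"
        using \<open>u3 \<noteq> 0\<close> \<open>u4 \<noteq> 0\<close> assms(2) by (simp add: u)
      moreover have "1 / u3 \<in> {t3, 1 / t3}" "1 / u4 \<in> {t4, 1 / t4}" using u3 u4 by auto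
      ultimately show ?thesis by blast
    next
      assume "t1 * u = 1"
      then have "t1 * t2 * u3 * u4 = 1" by (simp add: u mult.assoc)
      with u3 u4 show ?thesis by blast
    qed
  qed
qed

lemma joukowsky_fibre_meets_two_if:
  assumes "t1 \<noteq> 0" "t2 \<noteq> 0" "t3 \<noteq> 0" "t4 \<noteq> 0"
    and "(\<exists>t\<in>{t1, t2, t3, t4}. t^2 = 1) \<or>
         (\<exists>u2\<in>{t2, 1 / t2}. \<exists>u3\<in>{t3, 1 / t3}. \<exists>u4\<in>{t4, 1 / t4}. t1 * u2 * u3 * u4 = 1)"
  shows "\<exists>x1 x2 x3. theta_param (joukowsky t1) (joukowsky t2) (joukowsky t3) (joukowsky t4) =
           theta_param x1 x2 x3 2"
  using assms(5)
proof
  assume "\<exists>t\<in>{t1, t2, t3, t4}. t^2 = 1"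
  then obtain t where "t \<in> {t1, t2, t3, t4}" "t = 1 \<or> t = -1"
    by (auto simp: power2_eq_1_iff)
  then have "joukowsky t \<in> {joukowsky t1, joukowsky t2, joukowsky t3, joukowsky t4}"
    and "joukowsky t = 2 \<or> joukowsky t = -2"
    by (auto simp: joukowsky_def)
  then show ?thesis by (rule theta_param_fibre_meets_two_if_entry_two)
next
  assume "\<exists>u2\<in>{t2, 1 / t2}. \<exists>u3\<in>{t3, 1 / t3}. \<exists>u4\<in>{t4, 1 / t4}. t1 * u2 * u3 * u4 = 1"
  then obtain u2 u3 u4 where u: "u2 \<in> {t2, 1 / t2}" "u3 \<in> {t3, 1 / t3}" "u4 \<in> {t4, 1 / t4}"
    and prod: "t1 * u2 * u3 * u4 = 1"
    by blast
  have "u2 \<noteq> 0" "u3 \<noteq> 0" "u4 \<noteq> 0" using u assms(2-4) by auto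
  moreover have "joukowsky u2 = joukowsky t2" "joukowsky u3 = joukowsky t3"
    "joukowsky u4 = joukowsky t4"
    using u by (auto simp: joukowsky_inverse)
  ultimately show ?thesis
    using theta_param_joukowsky_product_one[OF assms(1) _ _ _ prod] by metis
qed

theorem joukowsky_fibre_meets_two_iff:
  assumes "t1 \<noteq> 0" "t2 \<noteq> 0" "t3 \<noteq> 0" "t4 \<noteq> 0"
  shows "(\<exists>x1 x2 x3. theta_param (joukowsky t1) (joukowsky t2) (joukowsky t3) (joukowsky t4) =
           theta_param x1 x2 x3 2) \<longleftrightarrow>
         (\<exists>t\<in>{t1, t2, t3, t4}. t^2 = 1) \<or>
         (\<exists>u2\<in>{t2, 1 / t2}. \<exists>u3\<in>{t3, 1 / t3}. \<exists>u4\<in>{t4, 1 / t4}. t1 * u2 * u3 * u4 = 1)"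
  using joukowsky_fibre_meets_two_imp[OF assms] joukowsky_fibre_meets_two_if[OF assms] by blast

definition expi_pi :: "complex \<Rightarrow> complex" where
  "expi_pi k = exp (\<i> * of_real pi * k)"

lemma expi_pi_nonzero: "expi_pi k \<noteq> 0"
  by (simp add: expi_pi_def)

lemma expi_pi_add: "expi_pi (a + b) = expi_pi a * expi_pi b"
  by (simp add: expi_pi_def distrib_left exp_add)

lemma expi_pi_uminus: "expi_pi (- k) = 1 / expi_pi k"
  by (simp add: expi_pi_def exp_minus inverse_eq_divide)

lemma two_cos_pi_mult: "2 * cos (of_real pi * k) = joukowsky (expi_pi k)"
  by (simp add: cos_exp_eq joukowsky_def expi_pi_def exp_minus inverse_eq_divide mult.assoc)

lemma rh_eq_theta_param:
  "rh \<kappa> = theta_param (joukowsky (expi_pi (\<kappa> 1))) (joukowsky (expi_pi (\<kappa> 2)))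
     (joukowsky (expi_pi (\<kappa> 3))) (joukowsky (- expi_pi (\<kappa> 4)))"
proof -
  have a4: "- 2 * cos (of_real pi * \<kappa> 4) = joukowsky (- expi_pi (\<kappa> 4))"
    using two_cos_pi_mult[of "\<kappa> 4"] by (simp add: joukowsky_uminus)
  show ?thesis unfolding rh_def Let_def theta_param_def two_cos_pi_mult a4 ..
qed

lemma expi_pi_eq_1_iff: "expi_pi k = 1 \<longleftrightarrow> (\<exists>n::int. k = of_int (2 * n))"
proof -
  have "expi_pi k = 1 \<longleftrightarrow> Im k = 0 \<and> (\<exists>n::int. Re k = of_int (2 * n))"
    unfolding expi_pi_def exp_eq_1 by simp
  also have "\<dots> \<longleftrightarrow> (\<exists>n::int. k = of_int (2 * n))"
    by (auto simp: complex_eq_iff)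
  finally show ?thesis .
qed

lemma expi_pi_eq_minus_1_iff: "expi_pi k = -1 \<longleftrightarrow> (\<exists>m::int. k = of_int (2 * m + 1))"
proof -
  have "expi_pi 1 = -1" by (simp add: expi_pi_def)
  then have "expi_pi k = - expi_pi (k - 1)"
    using expi_pi_add[of "k - 1" 1] by simp
  then have "expi_pi k = -1 \<longleftrightarrow> expi_pi (k - 1) = 1" by auto
  also have "\<dots> \<longleftrightarrow> (\<exists>m::int. k - 1 = of_int (2 * m))"
    by (rule expi_pi_eq_1_iff)
  also have "\<dots> \<longleftrightarrow> (\<exists>m::int. k = of_int (2 * m + 1))"
    by (simp add: diff_eq_eq)
  finally show ?thesis .
qed

lemma expi_pi_square_eq_1_iff: "(expi_pi k)^2 = 1 \<longleftrightarrow> k \<in> \<int>"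
proof -
  have "(expi_pi k)^2 = expi_pi (k + k)"
    unfolding expi_pi_add power2_eq_square ..
  then have "(expi_pi k)^2 = 1 \<longleftrightarrow> (\<exists>n::int. k + k = of_int (2 * n))"
    by (simp only: expi_pi_eq_1_iff)
  also have "\<dots> \<longleftrightarrow> (\<exists>n::int. k = of_int n)"
    by simp
  also have "\<dots> \<longleftrightarrow> k \<in> \<int>"
    by (auto elim: Ints_cases)
  finally show ?thesis .
qed

lemma Wall_iff_expi_pi:
  "\<kappa> \<in> Wall \<longleftrightarrow>
     (\<exists>t\<in>{expi_pi (\<kappa> 1), expi_pi (\<kappa> 2), expi_pi (\<kappa> 3), - expi_pi (\<kappa> 4)}. t^2 = 1) \<or>
     (\<exists>u2\<in>{expi_pi (\<kappa> 2), 1 / expi_pi (\<kappa> 2)}. \<exists>u3\<in>{expi_pi (\<kappa> 3), 1 / expi_pi (\<kappa> 3)}.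
      \<exists>u4\<in>{- expi_pi (\<kappa> 4), 1 / (- expi_pi (\<kappa> 4))}. expi_pi (\<kappa> 1) * u2 * u3 * u4 = 1)"
proof -
  have odd_sum: "(\<exists>m::int. \<kappa> 1 + s2 * \<kappa> 2 + s3 * \<kappa> 3 + s4 * \<kappa> 4 = of_int (2 * m + 1)) \<longleftrightarrow>
      expi_pi (\<kappa> 1) * expi_pi (s2 * \<kappa> 2) * expi_pi (s3 * \<kappa> 3) * - expi_pi (s4 * \<kappa> 4) = 1"
    for s2 s3 s4
  proof -
    have "(\<exists>m::int. \<kappa> 1 + s2 * \<kappa> 2 + s3 * \<kappa> 3 + s4 * \<kappa> 4 = of_int (2 * m + 1)) \<longleftrightarrow>
        expi_pi (\<kappa> 1) * expi_pi (s2 * \<kappa> 2) * expi_pi (s3 * \<kappa> 3) * expi_pi (s4 * \<kappa> 4) = -1"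
      by (simp only: expi_pi_eq_minus_1_iff[symmetric] expi_pi_add)
    also have "\<dots> \<longleftrightarrow>
        expi_pi (\<kappa> 1) * expi_pi (s2 * \<kappa> 2) * expi_pi (s3 * \<kappa> 3) * - expi_pi (s4 * \<kappa> 4) = 1"
      by algebra
    finally show ?thesis .
  qed
  have "(\<exists>i\<in>{1,2,3,4}. \<kappa> i \<in> \<int>) \<longleftrightarrow>
      (\<exists>t\<in>{expi_pi (\<kappa> 1), expi_pi (\<kappa> 2), expi_pi (\<kappa> 3), - expi_pi (\<kappa> 4)}. t^2 = 1)"
    by (simp add: expi_pi_square_eq_1_iff)
  moreover have "(\<exists>s2\<in>{1, -1}. \<exists>s3\<in>{1, -1}. \<exists>s4\<in>{1, -1}. \<exists>m::int.
        \<kappa> 1 + s2 * \<kappa> 2 + s3 * \<kappa> 3 + s4 * \<kappa> 4 = of_int (2 * m + 1)) \<longleftrightarrow>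
      (\<exists>u2\<in>{expi_pi (\<kappa> 2), 1 / expi_pi (\<kappa> 2)}. \<exists>u3\<in>{expi_pi (\<kappa> 3), 1 / expi_pi (\<kappa> 3)}.
       \<exists>u4\<in>{- expi_pi (\<kappa> 4), 1 / (- expi_pi (\<kappa> 4))}. expi_pi (\<kappa> 1) * u2 * u3 * u4 = 1)"
    unfolding odd_sum by (simp add: expi_pi_uminus)
  ultimately show ?thesis unfolding Wall_def by blast
qed

theorem lemma5p2:
  shows "(\<forall>\<theta>. smooth_near_L \<theta>) \<and>
         (\<forall>\<kappa>\<in>Kset. smooth_everywhere (rh \<kappa>) \<longleftrightarrow> \<kappa> \<in> Kset - Wall)"
proof -
  have "smooth_everywhere (rh \<kappa>) \<longleftrightarrow> \<kappa> \<notin> Wall" for \<kappa>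
    unfolding rh_eq_theta_param smooth_everywhere_theta_param_iff Wall_iff_expi_pi
    by (subst joukowsky_fibre_meets_two_iff) (simp_all add: expi_pi_nonzero)
  then show ?thesis using smooth_near_L by blast
qed

end
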